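(* Let $s,t,n$ be positive integers. For $0\le i\le t-1$ let $T_i$ be the set of all lattice paths from $(1,i)$ to $(sn+1,tn+i)$, and let $T=\bigcup_{i=0}^{t-1}T_i$. For $1\le j\le s$, let $U_j$ be the set of paths in $T$ that share at least one lattice point with $A_{s,t}$ and whose first such lattice point (in the order traversed) has $x$-coordinate congruent to $j$ modulo $s$. Then for every $j\in\{1,\dots,s\}$, \[ |U_j| = \binom{sn+tn}{tn-1}, \] and more precisely, for every positive integer $c$, the number of paths in $U_j$ with exactly $c-1$ northwest corners equals $\binom{sn-1}{c-2}\binom{tn+1}{c}$.
   Context: A lattice path is a finite sequence of unit steps, each north $(0,1)$ or east $(1,0)$. For positive integers $s,t$, $A_{s,t}$ is the infinite staircase path that starts at $(0,t)$ and then takes $s$ steps east, $t$ steps north, $s$ steps east, $t$ steps north, and so on forever. A northwest corner of a path is a north step immediately followed by an east step. Binomial coefficients with out-of-range lower index are $0$. *)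

theory Defs
  imports Main
begin

text \<open>A lattice path is represented by its starting point and its list of steps;
  a step True is a north step (0,1), a step False is an east step (1,0).\<close>

definition path_pt :: "int \<times> int \<Rightarrow> bool list \<Rightarrow> nat \<Rightarrow> int \<times> int" where
  "path_pt st ws m = (fst st + int (count_list (take m ws) False),
                      snd st + int (count_list (take m ws) True))"

definition path_points :: "int \<times> int \<Rightarrow> bool list \<Rightarrow> (int \<times> int) set" where
  "path_points st ws = {path_pt st ws m | m. m \<le> length ws}"

definition A_step :: "nat \<Rightarrow> nat \<Rightarrow> nat \<Rightarrow> bool" where
  "A_step s t k = (s \<le> k mod (s + t))"

definition A_pt :: "nat \<Rightarrow> nat \<Rightarrow> nat \<Rightarrow> int \<times> int" where
  "A_pt s t m = (int (card {k. k < m \<and> \<not> A_step s t k}),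
                 int t + int (card {k. k < m \<and> A_step s t k}))"

definition A_points :: "nat \<Rightarrow> nat \<Rightarrow> (int \<times> int) set" where
  "A_points s t = range (A_pt s t)"

definition nw_corners :: "bool list \<Rightarrow> nat" where
  "nw_corners ws = card {k. Suc k < length ws \<and> ws ! k \<and> \<not> ws ! Suc k}"

text \<open>T: pairs (i, ws) encoding the path from (1,i) to (sn+1, tn+i), 0 <= i <= t-1.\<close>

definition T_set :: "nat \<Rightarrow> nat \<Rightarrow> nat \<Rightarrow> (nat \<times> bool list) set" where
  "T_set s t n = {(i, ws). i < t \<and> length ws = s * n + t * n \<and> count_list ws True = t * n}"

definition first_hit :: "nat \<Rightarrow> nat \<Rightarrow> int \<times> int \<Rightarrow> bool list \<Rightarrow> int \<times> int" where
  "first_hit s t st ws =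
     path_pt st ws (LEAST m. m \<le> length ws \<and> path_pt st ws m \<in> A_points s t)"

definition U_set :: "nat \<Rightarrow> nat \<Rightarrow> nat \<Rightarrow> nat \<Rightarrow> (nat \<times> bool list) set" where
  "U_set s t n j = {(i, ws) \<in> T_set s t n.
       path_points (1, int i) ws \<inter> A_points s t \<noteq> {} \<and>
       fst (first_hit s t (1, int i) ws) mod int s = int j mod int s}"

end

theory Submission
  imports Defs
begin

text \<open>
  A path of U_j meets the staircase A for the first time
  by a north step, so it splits as u @ True # P, where the approach u stays strictly to
  the right of A and the hit has abscissa 1 + #east(u) \<equiv> j (mod s).  Reversing u and
  replacing the north step by an east step yields rev u @ False # P, a word with sn+1
  east and tn-1 north steps; under this reflection the approach becomes the part of the
  word before its first passage through the boundary b \<mapsto> s (b div t) + j, and i is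
  recovered as the unique residue with t | i + #north(u) + 1.  This is a bijection
  between U_j and all such words, giving the binomial count.  The northwest corners of
  the path correspond to corners of the word where the first passage is followed by a
  virtual north step, and the distribution of this statistic turns out to be the same
  for every admissible boundary; a first-step recursion evaluates it in closed form.
\<close>

section \<open>Words with prescribed numbers of east and north steps\<close>

definition words :: "nat \<Rightarrow> nat \<Rightarrow> bool list set" where
  "words a b = {w. count_list w False = a \<and> count_list w True = b}"

lemma length_eq_counts: "length w = count_list w False + count_list w True"
  by (induction w) auto

lemma finite_words: "finite (words a b)"
proof (rule finite_subset)
  show "words a b \<subseteq> {w. set w \<subseteq> UNIV \<and> length w = a + b}"
    unfolding words_def using length_eq_counts by auto
  show "finite {w::bool list. set w \<subseteq> UNIV \<and> length w = a + b}"
    by (rule finite_lists_length_eq) simp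
qed

lemma words_first_step:
  "{w \<in> words a b. F w} =
     (if a = 0 \<and> b = 0 \<and> F [] then {[]} else {}) \<union>
     Cons False ` {w. 0 < a \<and> w \<in> words (a - 1) b \<and> F (False # w)} \<union>
     Cons True ` {w. 0 < b \<and> w \<in> words a (b - 1) \<and> F (True # w)}"
  (is "?L = ?R")
proof
  show "?L \<subseteq> ?R"
  proof
    fix w assume "w \<in> ?L"
    then show "w \<in> ?R" by (cases w) (auto simp: words_def split: if_splits)
  qed
qed (auto simp: words_def split: if_splits)

lemma card_words_first_step:
  "card {w \<in> words a b. F w} =
     (if a = 0 \<and> b = 0 \<and> F [] then 1 else 0) +
     (if 0 < a then card {w \<in> words (a - 1) b. F (False # w)} else 0) +
     (if 0 < b then card {w \<in> words a (b - 1). F (True # w)} else 0)"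
proof -
  let ?E = "{w. 0 < a \<and> w \<in> words (a - 1) b \<and> F (False # w)}"
  let ?N = "{w. 0 < b \<and> w \<in> words a (b - 1) \<and> F (True # w)}"
  have "finite ?E" by (rule finite_subset[OF _ finite_words[of "a - 1" b]]) auto
  moreover have "finite ?N" by (rule finite_subset[OF _ finite_words[of a "b - 1"]]) auto
  ultimately have "card {w \<in> words a b. F w} =
      (if a = 0 \<and> b = 0 \<and> F [] then 1 else 0) + card (Cons False ` ?E) + card (Cons True ` ?N)"
    unfolding words_first_step by (subst card_Un_disjoint; auto)+
  also have "\<dots> = (if a = 0 \<and> b = 0 \<and> F [] then 1 else 0) + card ?E + card ?N"
    by (simp add: card_image)
  finally show ?thesis by (cases "0 < a"; cases "0 < b") auto
qed

lemma card_words: "card (words a b) = (a + b) choose b"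
proof (induction "a + b" arbitrary: a b)
  case 0
  then show ?case using card_words_first_step[of a b "\<lambda>_. True"] by simp
next
  case (Suc m)
  have "card (words a b) = (if 0 < a then card (words (a - 1) b) else 0)
                          + (if 0 < b then card (words a (b - 1)) else 0)"
    using card_words_first_step[of a b "\<lambda>_. True"] Suc(2) by simp
  also have "\<dots> = (a + b) choose b"
    using Suc by (cases a; cases b) auto
  finally show ?case .
qed


section \<open>Northwest corners\<close>

text \<open>corners p w counts the northwest corners of w, where p says whether w is
  preceded by a north step (so that an initial east step of w also forms a corner).\<close>

fun corners :: "bool \<Rightarrow> bool list \<Rightarrow> nat" where
  "corners p [] = 0"
| "corners p (True # w) = corners True w"
| "corners p (False # w) = (if p then 1 else 0) + corners False w"

lemma corners_append: "corners p (xs @ ys) = corners p xs + corners (if xs = [] then p else last xs) ys"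
proof (induction xs arbitrary: p)
  case (Cons x xs)
  then show ?case by (cases x) auto
qed simp

lemma corners_True_eq:
  "corners True w = corners False w + (if w \<noteq> [] \<and> \<not> hd w then 1 else 0)"
proof (cases w)
  case (Cons x w')
  then show ?thesis by (cases x) auto
qed simp

text \<open>corners True w is the number of maximal runs of east steps in w, which is
  invariant under reversal.\<close>

lemma corners_rev_True: "corners True (rev u) = corners True u"
proof (induction u rule: rev_induct)
  case (snoc x u)
  have "corners True (u @ [x]) = corners True u + corners (if u = [] then True else last u) [x]"
    by (rule corners_append)
  moreover have "corners True (rev u) = corners False (rev u) + (if u \<noteq> [] \<and> \<not> last u then 1 else 0)"
    using corners_True_eq[of "rev u"] by (simp add: hd_rev)
  ultimately show ?case using snoc by (cases x) auto
qed simp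

lemma corners_rev_snoc_east: "corners True (rev u @ [False]) = Suc (corners False u)"
proof -
  have "corners True (rev u @ [False]) = corners True (rev u) + (if u \<noteq> [] \<and> \<not> hd u then 0 else 1)"
    using corners_append[of True "rev u" "[False]"] by (simp add: last_rev)
  also have "\<dots> = corners False u + (if u \<noteq> [] \<and> \<not> hd u then 1 else 0)
                   + (if u \<noteq> [] \<and> \<not> hd u then 0 else 1)"
    using corners_rev_True corners_True_eq[of u] by simp
  finally show ?thesis by simp
qed

lemma nw_corners_Cons:
  "nw_corners (x # w) = (if x \<and> w \<noteq> [] \<and> \<not> hd w then 1 else 0) + nw_corners w"
proof -
  let ?C = "\<lambda>w. {k. Suc k < length w \<and> w ! k \<and> \<not> w ! Suc k}"
  have split: "?C (x # w) = (if x \<and> w \<noteq> [] \<and> \<not> hd w then {0} else {}) \<union> Suc ` ?C w"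
  proof (intro set_eqI)
    fix k
    show "k \<in> ?C (x # w) \<longleftrightarrow> k \<in> (if x \<and> w \<noteq> [] \<and> \<not> hd w then {0} else {}) \<union> Suc ` ?C w"
      by (cases k; cases w) auto
  qed
  have "finite (?C w)" by (rule finite_subset[of _ "{..<length w}"]) auto
  then have "card (?C (x # w)) = (if x \<and> w \<noteq> [] \<and> \<not> hd w then 1 else 0) + card (Suc ` ?C w)"
    unfolding split by (subst card_Un_disjoint) auto
  then show ?thesis unfolding nw_corners_def by (simp add: card_image)
qed

lemma nw_corners_eq: "nw_corners w = corners False w"
proof (induction w)
  case (Cons x w)
  then show ?case by (cases x) (auto simp: nw_corners_Cons corners_True_eq)
qed (simp add: nw_corners_def)

definition after_north_count :: "nat \<Rightarrow> nat \<Rightarrow> nat \<Rightarrow> nat" where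
  "after_north_count a b r = (if a = 0 then (if r = 0 then 1 else 0) else if r = 0 then 0
                              else ((a - 1) choose (r - 1)) * ((b + 1) choose r))"

lemma card_corners:
  "card {w \<in> words a b. corners False w = r} = (a choose r) * (b choose r) \<and>
   card {w \<in> words a b. corners True w = r} = after_north_count a b r"
proof (induction "a + b" arbitrary: a b r rule: less_induct)
  case less
  have IH_F: "\<And>a' b' r'. a' + b' < a + b \<Longrightarrow>
      card {w \<in> words a' b'. corners False w = r'} = (a' choose r') * (b' choose r')"
    and IH_T: "\<And>a' b' r'. a' + b' < a + b \<Longrightarrow>
      card {w \<in> words a' b'. corners True w = r'} = after_north_count a' b' r'"
    using less by blast+
  have rec_F: "card {w \<in> words a b. corners False w = r} =
     (if a = 0 \<and> b = 0 \<and> r = 0 then 1 else 0) +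
     (if 0 < a then card {w \<in> words (a - 1) b. corners False w = r} else 0) +
     (if 0 < b then card {w \<in> words a (b - 1). corners True w = r} else 0)"
    and rec_T: "card {w \<in> words a b. corners True w = r} =
     (if a = 0 \<and> b = 0 \<and> r = 0 then 1 else 0) +
     (if 0 < a then card {w \<in> words (a - 1) b. Suc (corners False w) = r} else 0) +
     (if 0 < b then card {w \<in> words a (b - 1). corners True w = r} else 0)"
    using card_words_first_step[of a b "\<lambda>w. corners _ w = r"] by simp_all
  show ?case
  proof (cases a)
    case 0
    then show ?thesis using rec_F rec_T IH_T[of 0 "b - 1" r]
      by (cases b) (simp_all add: after_north_count_def)
  next
    case (Suc a')
    have east: "card {w \<in> words a' b. Suc (corners False w) = r} =
                (if r = 0 then 0 else (a' choose (r - 1)) * (b choose (r - 1)))"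
      using IH_F[of a' b "r - 1"] Suc by (cases r) simp_all
    show ?thesis
    proof (cases b)
      case 0
      then show ?thesis using rec_F rec_T Suc IH_F[of a' 0 r] east
        by (cases r) (auto simp: after_north_count_def)
    next
      case (Suc b')
      then show ?thesis
        using rec_F rec_T \<open>a = Suc a'\<close> east IH_F[of a' b r] IH_T[of a b' r]
        by (cases r) (auto simp: after_north_count_def algebra_simps)
    qed
  qed
qed

section \<open>Corners relative to a boundary\<close>

text \<open>A boundary is a function g: at height b (number of north steps taken so far)
  the boundary lies g b units to the east of the current column.  The statistic
  bcorners g p w counts northwest corners of w (p: preceded by a north step), except
  that the first east step arriving at the boundary is followed by a virtual north
  step, after which corners are counted as usual.\<close>

fun bcorners :: "(nat \<Rightarrow> nat) \<Rightarrow> bool \<Rightarrow> bool list \<Rightarrow> nat" where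
  "bcorners g p [] = 0"
| "bcorners g p (True # w) = bcorners (\<lambda>b. g (Suc b)) True w"
| "bcorners g p (False # w) = (if p then 1 else 0) +
      (if g 0 \<le> 1 then corners True w else bcorners (\<lambda>b. g b - 1) False w)"

text \<open>Boundaries for words with X east and Y north steps: monotone, strictly inside
  the rectangle, so that every such word eventually reaches the boundary.\<close>

definition admissible :: "(nat \<Rightarrow> nat) \<Rightarrow> nat \<Rightarrow> nat \<Rightarrow> bool" where
  "admissible g X Y \<longleftrightarrow>
     (\<forall>b\<le>Y. 1 \<le> g b \<and> g b < X) \<and> (\<forall>b b'. b \<le> b' \<longrightarrow> b' \<le> Y \<longrightarrow> g b \<le> g b')"

definition boundary_count :: "nat \<Rightarrow> nat \<Rightarrow> nat \<Rightarrow> nat" where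
  "boundary_count X Y c = (if c < 2 then 0 else ((Y + 2) choose c) * ((X - 2) choose (c - 2)))"

lemma boundary_count_rec:
  "(if c < 1 then 0 else after_north_count (Suc X) Y (c - 1))
     + (if 0 < Y then boundary_count (Suc (Suc X)) (Y - 1) c else 0)
   = boundary_count (Suc (Suc X)) Y c"
proof (cases "c < 2")
  case True
  then show ?thesis by (cases c) (auto simp: boundary_count_def after_north_count_def)
next
  case False
  then obtain c' where "c = Suc (Suc c')" by (metis add_2_eq_Suc le_add_diff_inverse not_less)
  then show ?thesis by (cases Y) (auto simp: boundary_count_def after_north_count_def algebra_simps)
qed

lemma after_north_count_rec:
  "after_north_count (Suc X) Y c + (if 0 < Y then boundary_count (Suc (Suc X)) (Y - 1) c else 0)
   = after_north_count (Suc (Suc X)) Y c"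
proof (cases "c < 2")
  case True
  then show ?thesis by (cases c) (auto simp: boundary_count_def after_north_count_def)
next
  case False
  then obtain c' where "c = Suc (Suc c')" by (metis add_2_eq_Suc le_add_diff_inverse not_less)
  then show ?thesis by (cases Y) (auto simp: boundary_count_def after_north_count_def algebra_simps)
qed

lemma admissible_shift_north: "admissible g X Y \<Longrightarrow> 0 < Y \<Longrightarrow> admissible (\<lambda>b. g (Suc b)) X (Y - 1)"
  unfolding admissible_def by auto

lemma admissible_shift_east:
  assumes "admissible g X Y" "1 < g 0"
  shows "admissible (\<lambda>b. g b - 1) (X - 1) Y"
  unfolding admissible_def
proof (intro conjI allI impI)
  fix b assume b: "b \<le> Y"
  have "g 0 \<le> g b" "g b < X" using assms(1) b unfolding admissible_def by auto
  then show "1 \<le> g b - 1" "g b - 1 < X - 1" using assms(2) by linarith+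
next
  fix b b' :: nat assume "b \<le> b'" "b' \<le> Y"
  then show "g b - 1 \<le> g b' - 1" using assms(1) unfolding admissible_def by (auto intro: diff_le_mono)
qed

text \<open>Induction on the length: after a north step the boundary is
  shifted down, after an east step either the passage has occurred (and ordinary
  corners are counted) or the boundary moves one unit closer.\<close>

lemma card_bcorners:
  "admissible g X Y \<Longrightarrow>
   card {w \<in> words X Y. bcorners g True w = c} = boundary_count X Y c \<and>
   card {w \<in> words X Y. bcorners g False w = c} = after_north_count X Y c"
proof (induction "X + Y" arbitrary: X Y g c rule: less_induct)
  case less
  have g0: "1 \<le> g 0" "g 0 < X" using less(2) unfolding admissible_def by auto
  define X' where "X' = X - 2"
  have X: "X = Suc (Suc X')" using g0 unfolding X'_def by linarith
  have first_step: "\<And>p. card {w \<in> words X Y. bcorners g p w = c} =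
     card {w \<in> words (Suc X') Y. bcorners g p (False # w) = c} +
     (if 0 < Y then card {w \<in> words X (Y - 1). bcorners (\<lambda>b. g (Suc b)) True w = c} else 0)"
    using card_words_first_step[of X Y "\<lambda>w. bcorners g _ w = c"] X by simp
  have north: "(if 0 < Y then card {w \<in> words X (Y - 1). bcorners (\<lambda>b. g (Suc b)) True w = c} else 0)
             = (if 0 < Y then boundary_count X (Y - 1) c else 0)"
    using less(1)[of X "Y - 1"] admissible_shift_north[OF less(2)] by auto
  have east: "card {w \<in> words (Suc X') Y. bcorners g p (False # w) = c} =
     (if c < (if p then 1 else 0) then 0 else after_north_count (Suc X') Y (c - (if p then 1 else 0)))"
    for p
  proof -
    let ?d = "(if p then 1 else 0) :: nat"
    show ?thesis
    proof (cases "g 0 \<le> 1")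
      case True
      then have "{w \<in> words (Suc X') Y. bcorners g p (False # w) = c} =
          (if c < ?d then {} else {w \<in> words (Suc X') Y. corners True w = c - ?d})" by auto
      then show ?thesis using card_corners[of "Suc X'" Y "c - ?d"] by simp
    next
      case False
      then have "{w \<in> words (Suc X') Y. bcorners g p (False # w) = c} =
          (if c < ?d then {} else {w \<in> words (Suc X') Y. bcorners (\<lambda>b. g b - 1) False w = c - ?d})"
        by auto
      moreover have "admissible (\<lambda>b. g b - 1) (Suc X') Y"
        using admissible_shift_east[OF less(2)] False X by simp
      ultimately show ?thesis using less(1)[of "Suc X'" Y] X by auto
    qed
  qed
  show ?case
  proof
    have "card {w \<in> words X Y. bcorners g True w = c} =
        (if c < 1 then 0 else after_north_count (Suc X') Y (c - 1))
        + (if 0 < Y then boundary_count X (Y - 1) c else 0)"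
      using first_step[of True] east[of True] north by simp
    then show "card {w \<in> words X Y. bcorners g True w = c} = boundary_count X Y c"
      using boundary_count_rec[of c X' Y] by (simp only: X)
  next
    have "card {w \<in> words X Y. bcorners g False w = c} =
        after_north_count (Suc X') Y c + (if 0 < Y then boundary_count X (Y - 1) c else 0)"
      using first_step[of False] east[of False] north by simp
    then show "card {w \<in> words X Y. bcorners g False w = c} = after_north_count X Y c"
      using after_north_count_rec[of X' Y c] by (simp only: X)
  qed
qed

section \<open>First passage through a boundary\<close>

definition stays_left :: "(nat \<Rightarrow> nat) \<Rightarrow> bool list \<Rightarrow> bool" where
  "stays_left g v \<longleftrightarrow>
     (\<forall>k\<le>length v. count_list (take k v) False < g (count_list (take k v) True))"

definition reaches_boundary :: "(nat \<Rightarrow> nat) \<Rightarrow> bool list \<Rightarrow> bool" where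
  "reaches_boundary g v \<longleftrightarrow> g (count_list v True) \<le> Suc (count_list v False)"

lemma all_le_Suc_iff: "(\<forall>k\<le>Suc n. P k) \<longleftrightarrow> P 0 \<and> (\<forall>k\<le>n. P (Suc k))"
proof safe
  fix k assume "P 0" "\<forall>k\<le>n. P (Suc k)" "k \<le> Suc n"
  then show "P k" by (cases k) auto
qed auto

lemma stays_left_north: "stays_left g (True # v) \<longleftrightarrow> 0 < g 0 \<and> stays_left (\<lambda>b. g (Suc b)) v"
  unfolding stays_left_def by (simp add: all_le_Suc_iff)

lemma stays_left_east: "stays_left g (False # v) \<longleftrightarrow> stays_left (\<lambda>b. g b - 1) v"
  unfolding stays_left_def by (auto simp: all_le_Suc_iff less_diff_conv)

lemma stays_left_start: "stays_left g v \<Longrightarrow> 0 < g 0"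
  unfolding stays_left_def by (drule spec[of _ 0]) simp

lemma bcorners_first_passage:
  "stays_left g v \<Longrightarrow> reaches_boundary g v \<Longrightarrow>
   bcorners g p (v @ False # w) = corners p (v @ [False]) + corners True w"
proof (induction v arbitrary: g p)
  case Nil
  then show ?case by (simp add: reaches_boundary_def)
next
  case (Cons x v)
  show ?case
  proof (cases x)
    case True
    then show ?thesis using Cons by (simp add: stays_left_north reaches_boundary_def)
  next
    case False
    have "stays_left (\<lambda>b. g b - 1) v" using Cons.prems(1) False stays_left_east by simp
    moreover have "1 < g 0" using stays_left_start[OF calculation] by simp
    ultimately show ?thesis using Cons False by (simp add: reaches_boundary_def)
  qed
qed

lemma first_passage_exists:
  assumes "mono g" "\<forall>b. 1 \<le> g b" "\<not> stays_left g Q"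
  shows "\<exists>v w. Q = v @ False # w \<and> stays_left g v \<and> reaches_boundary g v"
  using assms
proof (induction Q arbitrary: g)
  case Nil
  then show ?case by (simp add: stays_left_def Suc_le_eq)
next
  case (Cons x Q)
  have g0: "0 < g 0" using Cons.prems(2) by (simp add: Suc_le_eq)
  show ?case
  proof (cases x)
    case True
    have "mono (\<lambda>b. g (Suc b))" "\<forall>b. 1 \<le> g (Suc b)" "\<not> stays_left (\<lambda>b. g (Suc b)) Q"
      using Cons.prems True g0 stays_left_north[of g Q] by (auto simp: mono_def)
    then obtain v w where "Q = v @ False # w" "stays_left (\<lambda>b. g (Suc b)) v"
        "reaches_boundary (\<lambda>b. g (Suc b)) v"
      using Cons.IH by blast
    then have "x # Q = (True # v) @ False # w \<and> stays_left g (True # v) \<and> reaches_boundary g (True # v)"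
      using True g0 stays_left_north by (simp add: reaches_boundary_def)
    then show ?thesis by blast
  next
    case east: False
    show ?thesis
    proof (cases "g 0 \<le> 1")
      case True
      then have "x # Q = [] @ False # Q \<and> stays_left g [] \<and> reaches_boundary g []"
        using east g0 by (simp add: stays_left_def reaches_boundary_def)
      then show ?thesis by blast
    next
      case False
      have "1 \<le> g b - 1" for b
      proof -
        have "g 0 \<le> g b" using Cons.prems(1) by (simp add: monoD)
        then show ?thesis using False by linarith
      qed
      then have "\<forall>b. 1 \<le> g b - 1" by blast
      moreover have "mono (\<lambda>b. g b - 1)" using Cons.prems(1) by (simp add: mono_def diff_le_mono)
      moreover have "\<not> stays_left (\<lambda>b. g b - 1) Q" using Cons.prems(3) east stays_left_east by simp
      ultimately obtain v w where "Q = v @ False # w" "stays_left (\<lambda>b. g b - 1) v"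
          "reaches_boundary (\<lambda>b. g b - 1) v"
        using Cons.IH by blast
      then have "x # Q = (False # v) @ False # w \<and> stays_left g (False # v) \<and> reaches_boundary g (False # v)"
        using east stays_left_east by (simp add: reaches_boundary_def)
      then show ?thesis by blast
    qed
  qed
qed

lemma first_passage_unique:
  assumes "v @ False # w = v' @ False # w'"
    "stays_left g v" "reaches_boundary g v" "stays_left g v'" "reaches_boundary g v'"
  shows "v = v' \<and> w = w'"
proof -
  have False if "v @ False # w = v' @ False # w'" "stays_left g v'" "reaches_boundary g v"
    "length v < length v'" for v w v' w'
  proof -
    have "take (Suc (length v)) v' = take (Suc (length v)) (v' @ False # w')"
      using that(4) by simp
    also have "\<dots> = v @ [False]" unfolding that(1)[symmetric] by simp
    finally have "count_list (v @ [False]) False < g (count_list (v @ [False]) True)"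
      using that(2,4) unfolding stays_left_def by (metis Suc_leI)
    then show False using that(3) unfolding reaches_boundary_def by simp
  qed
  then have "length v = length v'" using assms by (metis linorder_neqE_nat)
  then show ?thesis using assms(1) by simp
qed

section \<open>The staircase path\<close>

text \<open>Among the first m steps of the staircase, full periods contribute s east steps
  each and the incomplete period at most s.\<close>

lemma card_less_Suc_filter:
  "card {k. k < Suc m \<and> P k} = card {k. k < m \<and> P k} + (if P m then 1 else 0)"
proof -
  have "{k. k < Suc m \<and> P k} = {k. k < m \<and> P k} \<union> (if P m then {m} else {})"
    by (auto simp: less_Suc_eq)
  then show ?thesis by (auto simp: card_insert_if)
qed

lemma card_staircase_east:
  assumes "0 < s" "0 < t"
  shows "card {k. k < m \<and> \<not> A_step s t k} = (m div (s + t)) * s + min (m mod (s + t)) s"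
proof (induction m)
  case (Suc m)
  show ?case
  proof (cases "Suc (m mod (s + t)) = s + t")
    case True
    then have "Suc m div (s + t) = Suc (m div (s + t))" "Suc m mod (s + t) = 0" "A_step s t m"
      "min (m mod (s + t)) s = s"
      using assms div_Suc[of m "s + t"] mod_Suc[of m "s + t"] unfolding A_step_def by auto
    then show ?thesis using Suc.IH card_less_Suc_filter[of m "\<lambda>k. \<not> A_step s t k"] by simp
  next
    case False
    then have "Suc m div (s + t) = m div (s + t)" "Suc m mod (s + t) = Suc (m mod (s + t))"
      using div_Suc[of m "s + t"] mod_Suc[of m "s + t"] by auto
    then show ?thesis using Suc.IH card_less_Suc_filter[of m "\<lambda>k. \<not> A_step s t k"]
      unfolding A_step_def by (auto simp: min_def)
  qed
qed simp

lemma card_staircase_north: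
  "card {k. k < m \<and> A_step s t k} = m - card {k. k < m \<and> \<not> A_step s t k}"
proof -
  let ?N = "{k. k < m \<and> A_step s t k}" and ?E = "{k. k < m \<and> \<not> A_step s t k}"
  have "card (?N \<union> ?E) = card ?N + card ?E" by (rule card_Un_disjoint) auto
  moreover have "?N \<union> ?E = {..<m}" by auto
  ultimately show ?thesis by simp
qed

definition on_staircase :: "nat \<Rightarrow> nat \<Rightarrow> nat \<Rightarrow> nat \<Rightarrow> bool" where
  "on_staircase s t X Y \<longleftrightarrow> (\<exists>q r. (r \<le> s \<and> X = q * s + r \<and> Y = (q + 1) * t) \<or>
                                    (r \<le> t \<and> X = (q + 1) * s \<and> Y = (q + 1) * t + r))"

lemma A_pt_on_staircase:
  assumes "0 < s" "0 < t"
  shows "\<exists>X Y. A_pt s t m = (int X, int Y) \<and> on_staircase s t X Y"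
proof -
  define d where "d = m div (s + t)"
  define r where "r = m mod (s + t)"
  have m: "m = d * (s + t) + r" and r: "r < s + t"
    unfolding d_def r_def using assms div_mult_mod_eq[of m "s + t"] by simp_all
  have east: "card {k. k < m \<and> \<not> A_step s t k} = d * s + min r s"
    unfolding d_def r_def using card_staircase_east[OF assms] .
  show ?thesis
  proof (cases "r \<le> s")
    case True
    then have "A_pt s t m = (int (d * s + r), int ((d + 1) * t))"
      unfolding A_pt_def card_staircase_north[of m] east using m by (simp add: algebra_simps)
    moreover have "on_staircase s t (d * s + r) ((d + 1) * t)"
      unfolding on_staircase_def using True by blast
    ultimately show ?thesis by blast
  next
    case False
    then have "A_pt s t m = (int ((d + 1) * s), int ((d + 1) * t + (r - s)))"
      unfolding A_pt_def card_staircase_north[of m] east using m by (simp add: algebra_simps)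
    moreover have "r - s \<le> t" using r by linarith
    then have "on_staircase s t ((d + 1) * s) ((d + 1) * t + (r - s))"
      unfolding on_staircase_def by blast
    ultimately show ?thesis by blast
  qed
qed

lemma A_points_on_staircase:
  assumes "0 < s" "0 < t" "(int X, int Y) \<in> A_points s t"
  shows "on_staircase s t X Y"
proof -
  obtain m where "A_pt s t m = (int X, int Y)" using assms(3) unfolding A_points_def by auto
  then show ?thesis using A_pt_on_staircase[OF assms(1,2), of m] by auto
qed

lemma A_pt_horizontal:
  assumes "0 < s" "0 < t" "r \<le> s"
  shows "A_pt s t (q * (s + t) + r) = (int (q * s + r), int ((q + 1) * t))"
proof -
  let ?m = "q * (s + t) + r"
  have "card {k. k < ?m \<and> \<not> A_step s t k} = q * s + r"
  proof (cases "r < s + t")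
    case True
    then have "?m div (s + t) = q" "?m mod (s + t) = r" using assms by auto
    then show ?thesis using card_staircase_east[OF assms(1,2), of ?m] assms(3) by simp
  qed (use assms in simp)
  then show ?thesis unfolding A_pt_def card_staircase_north[of ?m] by (simp add: algebra_simps)
qed

definition right_of_staircase :: "nat \<Rightarrow> nat \<Rightarrow> nat \<Rightarrow> nat \<Rightarrow> bool" where
  "right_of_staircase s t X Y \<longleftrightarrow> s * (Y div t) < X"

lemma on_staircase_not_right:
  assumes "0 < t" "on_staircase s t X Y"
  shows "\<not> right_of_staircase s t X Y"
proof -
  obtain q r where "(r \<le> s \<and> X = q * s + r \<and> Y = (q + 1) * t) \<or>
                    (r \<le> t \<and> X = (q + 1) * s \<and> Y = (q + 1) * t + r)"
    using assms(2) unfolding on_staircase_def by blast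
  then show ?thesis
  proof
    assume "r \<le> s \<and> X = q * s + r \<and> Y = (q + 1) * t"
    then show ?thesis unfolding right_of_staircase_def using assms(1) by (simp add: algebra_simps)
  next
    assume H: "r \<le> t \<and> X = (q + 1) * s \<and> Y = (q + 1) * t + r"
    then have "q + 1 \<le> Y div t" using assms(1)
      by (metis div_le_mono le_add1 nonzero_mult_div_cancel_right not_gr0)
    then have "s * (q + 1) \<le> s * (Y div t)" by (rule mult_le_mono2)
    then show ?thesis unfolding right_of_staircase_def using H by (simp add: algebra_simps)
  qed
qed

lemma north_step_onto_staircase:
  assumes s: "0 < s" and t: "0 < t"
    and right: "right_of_staircase s t X Y" and not_right: "\<not> right_of_staircase s t X (Suc Y)"
  shows "(int X, int (Suc Y)) \<in> A_points s t"
proof -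
  define q where "q = Y div t"
  have "Suc Y div t \<noteq> Y div t" using right not_right unfolding right_of_staircase_def by auto
  then have q1: "Suc Y div t = Suc q" and "Suc Y mod t = 0"
    unfolding q_def using div_Suc[of Y t] by (auto split: if_splits)
  then have Y: "Suc Y = (q + 1) * t" by (metis add.commute add_0 div_mult_mod_eq mult.commute plus_1_eq_Suc)
  have "s * q < X" "X \<le> s * (q + 1)"
    using right not_right q1 unfolding right_of_staircase_def q_def by simp_all
  then have X: "X = q * s + (X - q * s)" and r: "X - q * s \<le> s" by (simp_all add: algebra_simps)
  have "A_pt s t (q * (s + t) + (X - q * s)) = (int X, int (Suc Y))"
    using A_pt_horizontal[OF s t r, of q] X Y by simp
  then show ?thesis unfolding A_points_def by (metis rangeI)
qed

section \<open>Paths starting at (1,i) and their first hit of the staircase\<close>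

lemma path_pt_from_1:
  "path_pt (1, int i) ws m = (int (Suc (count_list (take m ws) False)), int (i + count_list (take m ws) True))"
  by (simp add: path_pt_def)

definition ends_right :: "nat \<Rightarrow> nat \<Rightarrow> nat \<Rightarrow> bool list \<Rightarrow> bool" where
  "ends_right s t i w \<longleftrightarrow>
     right_of_staircase s t (Suc (count_list w False)) (i + count_list w True)"

definition approach :: "nat \<Rightarrow> nat \<Rightarrow> nat \<Rightarrow> bool list \<Rightarrow> bool" where
  "approach s t i u \<longleftrightarrow> (\<forall>k\<le>length u. ends_right s t i (take k u)) \<and> \<not> ends_right s t i (u @ [True])"

lemma ends_right_Nil: "i < t \<Longrightarrow> ends_right s t i []"
  by (simp add: ends_right_def right_of_staircase_def)

lemma staircase_point_not_right:
  assumes "0 < s" "0 < t" "path_pt (1, int i) ws m \<in> A_points s t"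
  shows "\<not> ends_right s t i (take m ws)"
  using on_staircase_not_right[OF assms(2) A_points_on_staircase[OF assms(1,2)]] assms(3)
  unfolding path_pt_from_1 ends_right_def by simp

text \<open>An east step keeps a path to the right of the staircase, so it can only be left
  by a north step, which then lands on the staircase.\<close>

lemma leaving_right_region:
  assumes "0 < s" "0 < t" "m < length ws"
    and "ends_right s t i (take m ws)" "\<not> ends_right s t i (take (Suc m) ws)"
  shows "ws ! m \<and> path_pt (1, int i) ws (Suc m) \<in> A_points s t"
proof -
  have take_Suc: "take (Suc m) ws = take m ws @ [ws ! m]"
    using assms(3) by (simp add: take_Suc_conv_app_nth)
  have north: "ws ! m"
  proof (rule ccontr)
    assume "\<not> ws ! m"
    then show False using assms(4,5) unfolding take_Suc ends_right_def right_of_staircase_def by simp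
  qed
  then have "right_of_staircase s t (Suc (count_list (take m ws) False)) (i + count_list (take m ws) True)"
    "\<not> right_of_staircase s t (Suc (count_list (take m ws) False)) (Suc (i + count_list (take m ws) True))"
    using assms(4,5) unfolding take_Suc ends_right_def by simp_all
  then have "(int (Suc (count_list (take m ws) False)), int (Suc (i + count_list (take m ws) True)))
      \<in> A_points s t"
    by (rule north_step_onto_staircase[OF assms(1,2)])
  then show ?thesis using north unfolding path_pt_from_1 take_Suc by simp
qed

lemma approach_hits:
  assumes "0 < s" "0 < t" "ws = u @ True # P" "approach s t i u"
  shows "path_pt (1, int i) ws (Suc (length u)) \<in> A_points s t"
proof -
  have "ends_right s t i (take (length u) ws)" "\<not> ends_right s t i (take (Suc (length u)) ws)"
    using assms(3,4) unfolding approach_def by (simp_all, metis order_refl take_all)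
  then show ?thesis using leaving_right_region[OF assms(1,2)] assms(3) by simp
qed

lemma first_hit_at:
  assumes "0 < s" "0 < t" "m \<le> length ws" "path_pt (1, int i) ws m \<in> A_points s t"
    and "\<forall>k<m. ends_right s t i (take k ws)"
  shows "first_hit s t (1, int i) ws = path_pt (1, int i) ws m"
proof -
  have "(LEAST m. m \<le> length ws \<and> path_pt (1, int i) ws m \<in> A_points s t) = m"
  proof (rule Least_equality)
    fix y assume "y \<le> length ws \<and> path_pt (1, int i) ws y \<in> A_points s t"
    then show "m \<le> y" using staircase_point_not_right[OF assms(1,2)] assms(5) by (meson not_le)
  qed (use assms(3,4) in simp)
  then show ?thesis unfolding first_hit_def by simp
qed

lemma meets_staircase_iff:
  assumes s: "0 < s" and t: "0 < t" and i: "i < t"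
  shows "path_points (1, int i) ws \<inter> A_points s t \<noteq> {} \<longleftrightarrow>
         (\<exists>u P. ws = u @ True # P \<and> approach s t i u)"
proof
  assume "path_points (1, int i) ws \<inter> A_points s t \<noteq> {}"
  then obtain m where m: "m \<le> length ws" "path_pt (1, int i) ws m \<in> A_points s t"
    unfolding path_points_def by blast
  define m0 where "m0 = (LEAST m. m \<le> length ws \<and> \<not> ends_right s t i (take m ws))"
  have m0: "m0 \<le> length ws" "\<not> ends_right s t i (take m0 ws)"
    using LeastI[of "\<lambda>m. m \<le> length ws \<and> \<not> ends_right s t i (take m ws)" m]
      m staircase_point_not_right[OF s t m(2)] unfolding m0_def by auto
  have before: "ends_right s t i (take k ws)" if "k < m0" for k
    using not_less_Least[OF that[unfolded m0_def]] that m0(1) unfolding m0_def by auto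
  obtain m1 where m1: "m0 = Suc m1"
    using m0(2) ends_right_Nil[OF i] by (cases m0) auto
  then have "ws ! m1"
    using leaving_right_region[OF s t _ before[of m1]] m0 by simp
  then have "ws = take m1 ws @ True # drop m0 ws" and "take m0 ws = take m1 ws @ [True]"
    using m0(1) m1 id_take_nth_drop[of m1 ws] by (simp_all add: take_Suc_conv_app_nth)
  moreover have "approach s t i (take m1 ws)"
    unfolding approach_def using before m0(2) m1 \<open>take m0 ws = _\<close> by (simp add: min_def)
  ultimately show "\<exists>u P. ws = u @ True # P \<and> approach s t i u" by blast
next
  assume "\<exists>u P. ws = u @ True # P \<and> approach s t i u"
  then obtain u P where ws: "ws = u @ True # P" and "approach s t i u" by blast
  then have "path_pt (1, int i) ws (Suc (length u)) \<in> A_points s t"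
    using approach_hits[OF s t] by blast
  moreover have "Suc (length u) \<le> length ws" unfolding ws by simp
  ultimately show "path_points (1, int i) ws \<inter> A_points s t \<noteq> {}"
    unfolding path_points_def by blast
qed

lemma first_hit_approach:
  assumes "0 < s" "0 < t" "ws = u @ True # P" "approach s t i u"
  shows "first_hit s t (1, int i) ws = (int (Suc (count_list u False)), int (i + Suc (count_list u True)))"
proof -
  have "\<forall>k<Suc (length u). ends_right s t i (take k ws)"
    using assms(3,4) unfolding approach_def by simp
  moreover have "path_pt (1, int i) ws (Suc (length u)) \<in> A_points s t"
    using approach_hits[OF assms] .
  ultimately have "first_hit s t (1, int i) ws = path_pt (1, int i) ws (Suc (length u))"
    using first_hit_at[OF assms(1,2)] assms(3) by simp
  then show ?thesis unfolding path_pt_from_1 assms(3) by simp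
qed

definition hit_split :: "nat \<Rightarrow> nat \<Rightarrow> nat \<Rightarrow> nat \<Rightarrow> bool list \<Rightarrow> bool" where
  "hit_split s t j i u \<longleftrightarrow> approach s t i u \<and> Suc (count_list u False) mod s = j mod s"

lemma U_condition_iff:
  assumes "0 < s" "0 < t" "i < t"
  shows "(path_points (1, int i) ws \<inter> A_points s t \<noteq> {} \<and>
          fst (first_hit s t (1, int i) ws) mod int s = int j mod int s) \<longleftrightarrow>
         (\<exists>u P. ws = u @ True # P \<and> hit_split s t j i u)"
proof -
  have "fst (first_hit s t (1, int i) ws) mod int s = int j mod int s \<longleftrightarrow>
        Suc (count_list u False) mod s = j mod s" if "ws = u @ True # P" "approach s t i u" for u P
    unfolding first_hit_approach[OF assms(1,2) that] fst_conv zmod_int[symmetric] by simp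
  then show ?thesis using meets_staircase_iff[OF assms] unfolding hit_split_def by blast
qed

section \<open>Reflecting the approach\<close>

text \<open>Reversing the approach u of a path in U_j (and reading it from its end) turns
  the condition "strictly right of the staircase" into "strictly left of the
  boundary b \<mapsto> s (b div t) + j", and the hit of the staircase into the first passage
  through that boundary.\<close>

definition staircase_boundary :: "nat \<Rightarrow> nat \<Rightarrow> nat \<Rightarrow> nat \<Rightarrow> nat" where
  "staircase_boundary s t j b = s * (b div t) + j"

lemma div_reflect:
  fixes t k y :: nat
  assumes "0 < t" "y < k * t"
  shows "(k * t - 1 - y) div t = k - 1 - y div t"
proof -
  define q r where "q = y div t" and "r = y mod t"
  have y: "y = q * t + r" and r: "r < t" unfolding q_def r_def using assms(1) by simp_all
  have "q < k" using assms(2) y by (metis add_lessD1 mult_less_cancel2)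
  then have "q * t + 1 * t \<le> k * t" by (metis add_mult_distrib mult_le_mono1 Suc_leI Suc_eq_plus1)
  moreover have "(k - 1 - q) * t = k * t - 1 * t - q * t" by (simp add: diff_mult_distrib)
  ultimately have "k * t - 1 - y = (t - 1 - r) + (k - 1 - q) * t" using y r by linarith
  then have "(k * t - 1 - y) div t = (k - 1 - q) + (t - 1 - r) div t" using assms(1) by simp
  then show ?thesis using r unfolding q_def by simp
qed

text \<open>The key arithmetic: with k t the height reached after the hit and
  s (k-1) + j its abscissa, a point (1+a, i+b) of the approach lies right of the
  staircase iff the corresponding point (e-a, nu-b) of the reflection lies left of
  the boundary.\<close>

lemma reflect_right_iff:
  fixes s t k i b a e nu j :: nat
  assumes "0 < t" "i + nu + 1 = k * t" "e + 1 = s * (k - 1) + j" "b \<le> nu" "a \<le> e" "1 \<le> j"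
  shows "s * ((i + b) div t) \<le> a \<longleftrightarrow> e - a < s * ((nu - b) div t) + j"
proof -
  define q where "q = (i + b) div t"
  have y: "i + b < k * t" using assms(2,4) by linarith
  have "nu - b = k * t - 1 - (i + b)" using assms(2,4) by linarith
  then have d: "(nu - b) div t = k - 1 - q" unfolding q_def using div_reflect[OF assms(1) y] by simp
  have "q < k" unfolding q_def using y by (metis less_mult_imp_div_less)
  then have "s * q \<le> s * (k - 1)" by (intro mult_le_mono2) simp
  moreover have "s * (k - 1 - q) = s * (k - 1) - s * q" by (simp add: diff_mult_distrib2)
  ultimately show ?thesis unfolding d q_def[symmetric] using assms(3,5) by linarith
qed

lemma mod_eq_in_range:
  fixes r j s :: nat
  assumes "1 \<le> r" "r \<le> s" "1 \<le> j" "j \<le> s" "r mod s = j mod s"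
  shows "r = j"
proof -
  have "r mod s = (if r = s then 0 else r)" "j mod s = (if j = s then 0 else j)"
    using assms(1-4) by auto
  then show ?thesis using assms by (auto split: if_splits)
qed

lemma counts_take_drop:
  "count_list (drop m u) x = count_list u x - count_list (take m u) x"
  "count_list (take m u) x \<le> count_list u x"
  by (metis append_take_drop_id count_list_append diff_add_inverse le_add1)+

text \<open>Where the approach ends: the hit is at a corner point ((k-1)s + j, k t) of the
  staircase, so the approach reaches height k t - 1 - i and abscissa (k-1)s + j - 1.\<close>

lemma hit_split_endpoint:
  assumes s: "0 < s" and t: "0 < t" and j: "1 \<le> j" "j \<le> s" and "hit_split s t j i u"
  shows "\<exists>k. i + count_list u True + 1 = k * t \<and> count_list u False + 1 = s * (k - 1) + j"
proof -
  let ?e = "count_list u False" and ?nu = "count_list u True"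
  have right: "s * ((i + ?nu) div t) \<le> ?e" and not_right: "\<not> s * ((i + Suc ?nu) div t) \<le> ?e"
    and cong: "Suc ?e mod s = j mod s"
    using assms(5) unfolding hit_split_def approach_def ends_right_def right_of_staircase_def
    by (auto dest: spec[of _ "length u"])
  define k where "k = (i + Suc ?nu) div t"
  have "(i + Suc ?nu) div t \<noteq> (i + ?nu) div t" using right not_right by auto
  then have k0: "(i + ?nu) div t = k - 1" and "t dvd (i + Suc ?nu)"
    unfolding k_def using div_Suc[of "i + ?nu" t] by (auto simp: dvd_eq_mod_eq_0 split: if_splits)
  then have k1: "i + ?nu + 1 = k * t" unfolding k_def by simp
  then have "1 \<le> k" by (cases k) auto
  then have "s * k = s * (k - 1) + s" by (cases k) auto
  then have r: "1 \<le> Suc ?e - s * (k - 1)" "Suc ?e - s * (k - 1) \<le> s"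
    using right not_right k0 unfolding k_def by simp_all
  have "(s * (k - 1) + (Suc ?e - s * (k - 1))) mod s = j mod s"
    using cong right k0 by simp
  then have "Suc ?e - s * (k - 1) = j" using mod_eq_in_range[OF r j] by simp
  then show ?thesis using k1 right k0 by (intro exI[of _ k]) simp
qed

lemma approach_height_div:
  fixes t i nu k :: nat
  assumes "0 < t" "i < t" "i + nu + 1 = k * t"
  shows "nu div t = k - 1"
proof -
  have "nu = k * t - 1 - i" using assms(3) by linarith
  moreover have "i < k * t" using assms(3) by linarith
  ultimately show ?thesis using div_reflect[OF assms(1)] assms(2) by simp
qed

lemma approach_prefixes_iff_stays_left:
  assumes t: "0 < t" and j: "1 \<le> j"
    and k1: "i + count_list u True + 1 = k * t" and k2: "count_list u False + 1 = s * (k - 1) + j"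
  shows "(\<forall>m\<le>length u. ends_right s t i (take m u)) \<longleftrightarrow> stays_left (staircase_boundary s t j) (rev u)"
proof -
  have point: "ends_right s t i (take m u) \<longleftrightarrow>
      count_list (rev (drop m u)) False < staircase_boundary s t j (count_list (rev (drop m u)) True)"
    for m
    unfolding ends_right_def right_of_staircase_def staircase_boundary_def count_list_rev counts_take_drop
    using reflect_right_iff[OF t k1 k2 counts_take_drop(2)[of m u True] counts_take_drop(2)[of m u False] j]
    by (simp add: less_Suc_eq_le)
  have "take m (rev u) = rev (drop (length u - m) u)" if "m \<le> length u" for m
    using that by (simp add: take_rev)
  then show ?thesis
    unfolding stays_left_def point
    by (metis (no_types, lifting) diff_diff_cancel diff_le_self length_rev)
qed

lemma hit_split_iff_reflected:
  assumes s: "0 < s" and t: "0 < t" and i: "i < t" and j: "1 \<le> j" "j \<le> s"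
  shows "hit_split s t j i u \<longleftrightarrow>
         stays_left (staircase_boundary s t j) (rev u) \<and>
         reaches_boundary (staircase_boundary s t j) (rev u) \<and> t dvd (i + Suc (count_list u True))"
    (is "_ \<longleftrightarrow> ?stays \<and> ?reaches \<and> ?dvd")
proof
  assume H: "hit_split s t j i u"
  then obtain k where k1: "i + count_list u True + 1 = k * t"
    and k2: "count_list u False + 1 = s * (k - 1) + j"
    using hit_split_endpoint[OF s t j] by blast
  have ?stays
    using H approach_prefixes_iff_stays_left[OF t j(1) k1 k2] unfolding hit_split_def approach_def by blast
  moreover have ?reaches
    using approach_height_div[OF t i k1] k2 unfolding reaches_boundary_def staircase_boundary_def by simp
  moreover have ?dvd using k1 by simp
  ultimately show "?stays \<and> ?reaches \<and> ?dvd" by blast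
next
  assume H: "?stays \<and> ?reaches \<and> ?dvd"
  define k where "k = (i + Suc (count_list u True)) div t"
  have k1: "i + count_list u True + 1 = k * t" unfolding k_def using H by simp
  have nu: "count_list u True div t = k - 1" using approach_height_div[OF t i k1] .
  have "count_list u False < s * (k - 1) + j"
    using H nu unfolding stays_left_def staircase_boundary_def by (auto dest: spec[of _ "length u"])
  moreover have "s * (k - 1) + j \<le> Suc (count_list u False)"
    using H nu unfolding reaches_boundary_def staircase_boundary_def by simp
  ultimately have k2: "count_list u False + 1 = s * (k - 1) + j" by simp
  have "1 \<le> k" using k1 by (cases k) auto
  then have "\<not> ends_right s t i (u @ [True])"
    using k1 k2 j(2) t unfolding ends_right_def right_of_staircase_def by (cases k) auto
  moreover have "Suc (count_list u False) mod s = j mod s" using k2 by (metis add.commute mod_mult_self2 plus_1_eq_Suc)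
  ultimately show "hit_split s t j i u"
    using H approach_prefixes_iff_stays_left[OF t j(1) k1 k2] unfolding hit_split_def approach_def by blast
qed

section \<open>The bijection\<close>

text \<open>A path of U_j is encoded by its starting height i, its approach u and the rest
  P after the north step onto the staircase.\<close>

definition hit_decomps :: "nat \<Rightarrow> nat \<Rightarrow> nat \<Rightarrow> nat \<Rightarrow> (nat \<times> bool list \<times> bool list) set" where
  "hit_decomps s t n j = {(i, u, P). i < t \<and> hit_split s t j i u \<and>
     count_list u False + count_list P False = s * n \<and>
     Suc (count_list u True + count_list P True) = t * n}"

definition join_hit :: "nat \<times> bool list \<times> bool list \<Rightarrow> nat \<times> bool list" where
  "join_hit = (\<lambda>(i, u, P). (i, u @ True # P))"

definition reflect_hit :: "nat \<times> bool list \<times> bool list \<Rightarrow> bool list" where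
  "reflect_hit = (\<lambda>(i, u, P). rev u @ False # P)"

lemma approach_unique:
  assumes "u @ True # P = u' @ True # P'" "approach s t i u" "approach s t i u'"
  shows "u = u' \<and> P = P'"
proof -
  have False if "u @ True # P = v @ True # Q" "approach s t i u" "approach s t i v"
      "length u < length v" for u P v Q
  proof -
    have "take (Suc (length u)) v = take (Suc (length u)) (v @ True # Q)" using that(4) by simp
    also have "\<dots> = u @ [True]" unfolding that(1)[symmetric] by simp
    finally show False using that(2-4) unfolding approach_def by (metis Suc_leI)
  qed
  then have "length u = length u'" using assms by (metis linorder_neqE_nat)
  then show ?thesis using assms(1) by simp
qed

lemma residue_unique:
  fixes i i' c t :: nat
  assumes "t dvd (i + c)" "t dvd (i' + c)" "i < t" "i' < t"
  shows "i = i'"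
proof -
  have False if "t dvd (a + c)" "t dvd (b + c)" "a < b" "b < t" for a b
  proof -
    have "t dvd (b - a)" using dvd_diff_nat[OF that(2,1)] by simp
    moreover have "0 < b - a" "b - a < t" using that(3,4) by auto
    ultimately show False by (simp add: nat_dvd_not_less)
  qed
  then show ?thesis using assms by (metis linorder_neqE_nat)
qed

lemma residue_exists:
  fixes t c :: nat
  assumes "0 < t"
  shows "\<exists>i<t. t dvd (i + c)"
proof -
  define i where "i = (t - c mod t) mod t"
  have "(i + c) mod t = (t - c mod t + c) mod t" unfolding i_def by (rule mod_add_left_eq)
  also have "\<dots> = (t - c mod t + c mod t) mod t" by (rule mod_add_right_eq[symmetric])
  also have "t - c mod t + c mod t = t" using mod_less_divisor[OF assms, of c] by linarith
  finally have "t dvd (i + c)" by (simp add: dvd_eq_mod_eq_0)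
  moreover have "i < t" unfolding i_def using assms by simp
  ultimately show ?thesis by blast
qed

lemma U_set_eq_join:
  assumes "0 < s" "0 < t" "1 \<le> j" "j \<le> s"
  shows "U_set s t n j = join_hit ` hit_decomps s t n j"
proof (intro set_eqI iffI)
  fix p assume p: "p \<in> U_set s t n j"
  obtain i ws where p_def: "p = (i, ws)" by (cases p)
  have i: "i < t" and counts: "length ws = s * n + t * n" "count_list ws True = t * n"
    using p unfolding p_def U_set_def T_set_def by auto
  obtain u P where ws: "ws = u @ True # P" and "hit_split s t j i u"
    using p U_condition_iff[OF assms(1,2) i] unfolding p_def U_set_def by blast
  moreover have "count_list ws False = s * n" using counts length_eq_counts[of ws] by simp
  ultimately have "(i, u, P) \<in> hit_decomps s t n j"
    using i counts unfolding hit_decomps_def ws by simp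
  then show "p \<in> join_hit ` hit_decomps s t n j" unfolding p_def ws join_hit_def by force
next
  fix p assume "p \<in> join_hit ` hit_decomps s t n j"
  then obtain i u P where d: "(i, u, P) \<in> hit_decomps s t n j" and p: "p = (i, u @ True # P)"
    unfolding join_hit_def by auto
  then have i: "i < t" and "hit_split s t j i u" unfolding hit_decomps_def by auto
  then have "path_points (1, int i) (u @ True # P) \<inter> A_points s t \<noteq> {} \<and>
      fst (first_hit s t (1, int i) (u @ True # P)) mod int s = int j mod int s"
    using U_condition_iff[OF assms(1,2) i] by blast
  moreover have "length (u @ True # P) = s * n + t * n" "count_list (u @ True # P) True = t * n"
    using d length_eq_counts[of "u @ True # P"] unfolding hit_decomps_def by auto
  ultimately show "p \<in> U_set s t n j" unfolding U_set_def T_set_def p using i by simp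
qed

lemma inj_on_join_hit: "inj_on join_hit (hit_decomps s t n j)"
proof (rule inj_onI)
  fix x y assume x: "x \<in> hit_decomps s t n j" and y: "y \<in> hit_decomps s t n j"
    and eq: "join_hit x = join_hit y"
  obtain i u P i' u' P' where xy: "x = (i, u, P)" "y = (i', u', P')" by (cases x, cases y) auto
  have "i = i'" "u @ True # P = u' @ True # P'" using eq unfolding xy join_hit_def by simp_all
  moreover have "approach s t i u" "approach s t i' u'"
    using x y unfolding xy hit_decomps_def hit_split_def by simp_all
  ultimately show "x = y" using approach_unique unfolding xy by blast
qed

lemma inj_on_reflect_hit:
  assumes "0 < s" "0 < t" "1 \<le> j" "j \<le> s"
  shows "inj_on reflect_hit (hit_decomps s t n j)"
proof (rule inj_onI)
  fix x y assume x: "x \<in> hit_decomps s t n j" and y: "y \<in> hit_decomps s t n j"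
    and eq: "reflect_hit x = reflect_hit y"
  obtain i u P i' u' P' where xy: "x = (i, u, P)" "y = (i', u', P')" by (cases x, cases y) auto
  have "i < t" "i' < t" "hit_split s t j i u" "hit_split s t j i' u'"
    using x y unfolding xy hit_decomps_def by auto
  then have refl: "stays_left (staircase_boundary s t j) (rev u)"
      "reaches_boundary (staircase_boundary s t j) (rev u)" "t dvd (i + Suc (count_list u True))"
    "stays_left (staircase_boundary s t j) (rev u')"
      "reaches_boundary (staircase_boundary s t j) (rev u')" "t dvd (i' + Suc (count_list u' True))"
    using hit_split_iff_reflected[OF assms(1,2) _ assms(3,4)] by blast+
  moreover have "rev u @ False # P = rev u' @ False # P'" using eq unfolding xy reflect_hit_def by simp
  ultimately have "u = u'" "P = P'" using first_passage_unique by blast+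
  then have "i = i'" using residue_unique refl \<open>i < t\<close> \<open>i' < t\<close> by metis
  then show "x = y" using xy \<open>u = u'\<close> \<open>P = P'\<close> by simp
qed

lemma staircase_boundary_top:
  assumes "0 < t" "0 < n" "j \<le> s"
  shows "staircase_boundary s t j (t * n - 1) \<le> s * n"
proof -
  have "(t * n - 1) div t = n - 1"
    using div_reflect[OF assms(1), of 0 n] assms by (simp add: mult.commute)
  then have "staircase_boundary s t j (t * n - 1) = s * (n - 1) + j"
    unfolding staircase_boundary_def by simp
  also have "\<dots> \<le> s * n" using assms(2,3) by (cases n) auto
  finally show ?thesis .
qed

lemma mono_staircase_boundary: "mono (staircase_boundary s t j)"
  unfolding mono_def staircase_boundary_def by (simp add: div_le_mono)

lemma words_eq_reflect:
  assumes "0 < s" "0 < t" "0 < n" "1 \<le> j" "j \<le> s"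
  shows "words (s * n + 1) (t * n - 1) = reflect_hit ` hit_decomps s t n j"
proof (intro set_eqI iffI)
  let ?g = "staircase_boundary s t j"
  fix Q assume "Q \<in> words (s * n + 1) (t * n - 1)"
  then have counts: "count_list Q False = s * n + 1" "count_list Q True = t * n - 1"
    unfolding words_def by auto
  have "\<not> count_list (take (length Q) Q) False < ?g (count_list (take (length Q) Q) True)"
    using counts staircase_boundary_top[OF assms(2,3,5)] by simp
  then have "\<not> stays_left ?g Q" unfolding stays_left_def by blast
  moreover have "\<forall>b. 1 \<le> ?g b" using assms(4) unfolding staircase_boundary_def by simp
  ultimately obtain v P where Q: "Q = v @ False # P" "stays_left ?g v" "reaches_boundary ?g v"
    using first_passage_exists[OF mono_staircase_boundary] by blast
  obtain i where i: "i < t" "t dvd (i + Suc (count_list v True))"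
    using residue_exists[OF assms(2)] by blast
  have "hit_split s t j i (rev v)"
    using hit_split_iff_reflected[OF assms(1,2) i(1) assms(4,5)] Q i by simp
  moreover have "count_list (rev v) False + count_list P False = s * n"
    "Suc (count_list (rev v) True + count_list P True) = t * n"
    using counts Q(1) assms(2,3) by simp_all
  ultimately have "(i, rev v, P) \<in> hit_decomps s t n j" using i unfolding hit_decomps_def by simp
  then show "Q \<in> reflect_hit ` hit_decomps s t n j" unfolding reflect_hit_def Q(1) by force
next
  fix Q assume "Q \<in> reflect_hit ` hit_decomps s t n j"
  then obtain i u P where "(i, u, P) \<in> hit_decomps s t n j" and Q: "Q = rev u @ False # P"
    unfolding reflect_hit_def by auto
  then have "count_list u False + count_list P False = s * n"
    "Suc (count_list u True + count_list P True) = t * n"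
    unfolding hit_decomps_def by simp_all
  then show "Q \<in> words (s * n + 1) (t * n - 1)" unfolding words_def Q by simp
qed

text \<open>The corners of a path in U_j and the boundary corners of its image: reflecting
  the approach preserves its corners, and the replaced north step is accounted for
  by the virtual north step after the first passage.\<close>

lemma bcorners_reflect_hit:
  assumes "0 < s" "0 < t" "1 \<le> j" "j \<le> s" "d \<in> hit_decomps s t n j"
  shows "bcorners (staircase_boundary s t j) True (reflect_hit d) = Suc (nw_corners (snd (join_hit d)))"
proof -
  obtain i u P where d: "d = (i, u, P)" by (cases d) auto
  have "i < t" "hit_split s t j i u" using assms(5) unfolding d hit_decomps_def by auto
  then have "stays_left (staircase_boundary s t j) (rev u)"
    "reaches_boundary (staircase_boundary s t j) (rev u)"
    using hit_split_iff_reflected[OF assms(1,2) _ assms(3,4)] by blast+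
  then have "bcorners (staircase_boundary s t j) True (reflect_hit d)
      = corners True (rev u @ [False]) + corners True P"
    unfolding d reflect_hit_def by (simp add: bcorners_first_passage)
  also have "\<dots> = Suc (corners False u + corners True P)" by (simp add: corners_rev_snoc_east)
  also have "corners False u + corners True P = nw_corners (snd (join_hit d))"
    unfolding d join_hit_def nw_corners_eq using corners_append[of False u "True # P"] by simp
  finally show ?thesis .
qed

lemma admissible_staircase_boundary:
  assumes "0 < t" "0 < n" "1 \<le> j" "j \<le> s"
  shows "admissible (staircase_boundary s t j) (s * n + 1) (t * n - 1)"
  unfolding admissible_def
proof (intro conjI allI impI)
  fix b assume "b \<le> t * n - 1"
  then have "staircase_boundary s t j b \<le> staircase_boundary s t j (t * n - 1)"
    using mono_staircase_boundary by (rule monoD[rotated])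
  then show "staircase_boundary s t j b < s * n + 1"
    using staircase_boundary_top[OF assms(1,2,4)] by simp
  show "1 \<le> staircase_boundary s t j b" using assms(3) unfolding staircase_boundary_def by simp
qed (use mono_staircase_boundary in \<open>simp add: monoD\<close>)

lemma card_filter_image:
  assumes "inj_on f D"
  shows "card {x \<in> f ` D. P x} = card {d \<in> D. P (f d)}"
proof -
  have "{x \<in> f ` D. P x} = f ` {d \<in> D. P (f d)}" by blast
  then show ?thesis using card_image[OF inj_on_subset[OF assms]] by simp
qed

lemma card_U_set_eq_words:
  assumes "0 < s" "0 < t" "0 < n" "1 \<le> j" "j \<le> s"
  shows "card (U_set s t n j) = card (words (s * n + 1) (t * n - 1))"
  unfolding U_set_eq_join[OF assms(1,2,4,5)] words_eq_reflect[OF assms]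
  using card_image[OF inj_on_join_hit] card_image[OF inj_on_reflect_hit[OF assms(1,2,4,5)]] by simp

lemma card_U_set_corners:
  assumes "0 < s" "0 < t" "0 < n" "1 \<le> j" "j \<le> s" "0 < c"
  shows "card {p \<in> U_set s t n j. nw_corners (snd p) = c - 1} =
         card {w \<in> words (s * n + 1) (t * n - 1). bcorners (staircase_boundary s t j) True w = c}"
proof -
  let ?D = "hit_decomps s t n j" and ?g = "staircase_boundary s t j"
  have "card {p \<in> U_set s t n j. nw_corners (snd p) = c - 1}
      = card {d \<in> ?D. nw_corners (snd (join_hit d)) = c - 1}"
    unfolding U_set_eq_join[OF assms(1,2,4,5)] by (rule card_filter_image[OF inj_on_join_hit])
  also have "\<dots> = card {d \<in> ?D. bcorners ?g True (reflect_hit d) = c}"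
  proof (intro arg_cong[where f = card] Collect_cong conj_cong refl)
    fix d assume "d \<in> ?D"
    then show "nw_corners (snd (join_hit d)) = c - 1 \<longleftrightarrow> bcorners ?g True (reflect_hit d) = c"
      using bcorners_reflect_hit[OF assms(1,2,4,5)] assms(6) by auto
  qed
  also have "\<dots> = card {w \<in> words (s * n + 1) (t * n - 1). bcorners ?g True w = c}"
    unfolding words_eq_reflect[OF assms(1-5)]
    by (rule card_filter_image[OF inj_on_reflect_hit[OF assms(1,2,4,5)], symmetric])
  finally show ?thesis .
qed

theorem mainTheorem8:
  fixes s t n j :: nat
  assumes "0 < s" and "0 < t" and "0 < n" and "1 \<le> j" and "j \<le> s"
  shows "card (U_set s t n j) = (s * n + t * n) choose (t * n - 1)
         \<and> (\<forall>c::nat. 0 < c \<longrightarrow>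
              card {p \<in> U_set s t n j. nw_corners (snd p) = c - 1}
              = (if c < 2 then 0 else (s * n - 1) choose (c - 2)) * ((t * n + 1) choose c))"
proof -
  have tn: "1 \<le> t * n" using assms(2,3) by simp
  have "card (U_set s t n j) = (s * n + t * n) choose (t * n - 1)"
    using card_U_set_eq_words[OF assms] card_words[of "s * n + 1" "t * n - 1"] tn by simp
  moreover have "card {p \<in> U_set s t n j. nw_corners (snd p) = c - 1}
      = (if c < 2 then 0 else (s * n - 1) choose (c - 2)) * ((t * n + 1) choose c)" if "0 < c" for c
    using card_U_set_corners[OF assms that] tn
      card_bcorners[OF admissible_staircase_boundary[OF assms(2-5)]]
    unfolding boundary_count_def by (simp add: mult.commute)
  ultimately show ?thesis by blast
qed

end
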